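(* Let $U=\big|\log\big(p_{\hat Y\mid A}(\hat Y\mid A)/p_{\hat Y}(\hat Y)\big)\big|$. For every $\delta\in(0,1]$, $\Pr(U>\epsilon_1)\le\delta$ where $$\epsilon_1=\frac{s^*}{\sqrt\delta}+\sup_{y\in\mathcal Y}\max\Big\{\gamma+\sum_{k=1}^d\log\Big(\frac{p_{\hat Y}(y)}{\inf_{a_k\in\mathcal A_k}p_{\hat Y\mid A_k}(y\mid a_k)}\Big),\ -\gamma+\sum_{k=1}^d\log\Big(\frac{\sup_{a_k\in\mathcal A_k}p_{\hat Y\mid A_k}(y\mid a_k)}{p_{\hat Y}(y)}\Big)\Big\},$$ with $s^*=(\sigma^{2/3}+\sigma_y^{2/3})^{3/2}$ and $\gamma=C(A)-C(A\mid\hat Y)$.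
   Context: Let $\hat Y$ take values in a finite set $\mathcal Y$ and let $A=(A_1,\dots,A_d)$ be a random vector, $A_k$ taking values in a finite set $\mathcal A_k$, $\mathcal A=\mathcal A_1\times\dots\times\mathcal A_d$; $(A,\hat Y)$ has joint law $p_{A,\hat Y}$. Write $p_V(v)=\Pr(V=v)$ and $p_{V\mid W}(v\mid w)=\Pr(V=v\mid W=w)$. Assume $p_{A,\hat Y}(a,y)>0$ for all $(a,y)\in\mathcal A\times\mathcal Y$. Define $L=\log\big(p_A(A)/\prod_{k} p_{A_k}(A_k)\big)$, $L_y=\log\big(p_{A\mid\hat Y}(A\mid\hat Y)/\prod_{k} p_{A_k\mid\hat Y}(A_k\mid\hat Y)\big)$, $C(A)=\mathbb E[L]$, $C(A\mid\hat Y)=\mathbb E[L_y]$, and $\sigma,\sigma_y$ the standard deviations of $L,L_y$. *)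

theory Defs
  imports "HOL-Probability.Probability"
begin

text \<open>The joint law of (A, Yhat) is a pmf P on pairs (a, y), where a :: nat => 'a
  is the vector (A_1,...,A_d) (components indexed by k < d) and y :: 'y.\<close>

definition pA :: "((nat \<Rightarrow> 'a) \<times> 'y) pmf \<Rightarrow> (nat \<Rightarrow> 'a) \<Rightarrow> real" where
  "pA P a = measure_pmf.prob P {z. fst z = a}"

definition pY :: "((nat \<Rightarrow> 'a) \<times> 'y) pmf \<Rightarrow> 'y \<Rightarrow> real" where
  "pY P y = measure_pmf.prob P {z. snd z = y}"

definition pAk :: "((nat \<Rightarrow> 'a) \<times> 'y) pmf \<Rightarrow> nat \<Rightarrow> 'a \<Rightarrow> real" where
  "pAk P k x = measure_pmf.prob P {z. fst z k = x}"

definition pAY :: "((nat \<Rightarrow> 'a) \<times> 'y) pmf \<Rightarrow> (nat \<Rightarrow> 'a) \<Rightarrow> 'y \<Rightarrow> real" where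
  "pAY P a y = measure_pmf.prob P {z. fst z = a \<and> snd z = y}"

definition pAkY :: "((nat \<Rightarrow> 'a) \<times> 'y) pmf \<Rightarrow> nat \<Rightarrow> 'a \<Rightarrow> 'y \<Rightarrow> real" where
  "pAkY P k x y = measure_pmf.prob P {z. fst z k = x \<and> snd z = y}"

definition pA_given_Y :: "((nat \<Rightarrow> 'a) \<times> 'y) pmf \<Rightarrow> (nat \<Rightarrow> 'a) \<Rightarrow> 'y \<Rightarrow> real" where
  "pA_given_Y P a y = pAY P a y / pY P y"

definition pAk_given_Y :: "((nat \<Rightarrow> 'a) \<times> 'y) pmf \<Rightarrow> nat \<Rightarrow> 'a \<Rightarrow> 'y \<Rightarrow> real" where
  "pAk_given_Y P k x y = pAkY P k x y / pY P y"

definition pY_given_A :: "((nat \<Rightarrow> 'a) \<times> 'y) pmf \<Rightarrow> 'y \<Rightarrow> (nat \<Rightarrow> 'a) \<Rightarrow> real" where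
  "pY_given_A P y a = pAY P a y / pA P a"

definition pY_given_Ak :: "((nat \<Rightarrow> 'a) \<times> 'y) pmf \<Rightarrow> 'y \<Rightarrow> nat \<Rightarrow> 'a \<Rightarrow> real" where
  "pY_given_Ak P y k x = pAkY P k x y / pAk P k x"

definition Lrv :: "nat \<Rightarrow> ((nat \<Rightarrow> 'a) \<times> 'y) pmf \<Rightarrow> (nat \<Rightarrow> 'a) \<times> 'y \<Rightarrow> real" where
  "Lrv d P z = ln (pA P (fst z) / (\<Prod>k<d. pAk P k (fst z k)))"

definition Lyrv :: "nat \<Rightarrow> ((nat \<Rightarrow> 'a) \<times> 'y) pmf \<Rightarrow> (nat \<Rightarrow> 'a) \<times> 'y \<Rightarrow> real" where
  "Lyrv d P z = ln (pA_given_Y P (fst z) (snd z) / (\<Prod>k<d. pAk_given_Y P k (fst z k) (snd z)))"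

definition TC :: "nat \<Rightarrow> ((nat \<Rightarrow> 'a) \<times> 'y) pmf \<Rightarrow> real" where
  "TC d P = measure_pmf.expectation P (Lrv d P)"

definition TCcond :: "nat \<Rightarrow> ((nat \<Rightarrow> 'a) \<times> 'y) pmf \<Rightarrow> real" where
  "TCcond d P = measure_pmf.expectation P (Lyrv d P)"

definition sigmaL :: "nat \<Rightarrow> ((nat \<Rightarrow> 'a) \<times> 'y) pmf \<Rightarrow> real" where
  "sigmaL d P = sqrt (measure_pmf.variance P (Lrv d P))"

definition sigmaLy :: "nat \<Rightarrow> ((nat \<Rightarrow> 'a) \<times> 'y) pmf \<Rightarrow> real" where
  "sigmaLy d P = sqrt (measure_pmf.variance P (Lyrv d P))"

definition Urv :: "((nat \<Rightarrow> 'a) \<times> 'y) pmf \<Rightarrow> (nat \<Rightarrow> 'a) \<times> 'y \<Rightarrow> real" where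
  "Urv P z = \<bar>ln (pY_given_A P (snd z) (fst z) / pY P (snd z))\<bar>"

definition epsilon1 ::
  "nat \<Rightarrow> (nat \<Rightarrow> 'a set) \<Rightarrow> ((nat \<Rightarrow> 'a) \<times> 'y::finite) pmf \<Rightarrow> real \<Rightarrow> real" where
  "epsilon1 d Ak P \<delta> =
     (let s = ((sigmaL d P) powr (2/3) + (sigmaLy d P) powr (2/3)) powr (3/2);
          \<gamma> = TC d P - TCcond d P
      in s / sqrt \<delta> +
         Max (range (\<lambda>y.
           max (\<gamma> + (\<Sum>k<d. ln (pY P y / Min ((\<lambda>x. pY_given_Ak P y k x) ` Ak k))))
               (- \<gamma> + (\<Sum>k<d. ln (Max ((\<lambda>x. pY_given_Ak P y k x) ` Ak k) / pY P y))))))"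

end

theory Submission
  imports Defs
begin

text \<open>On the support, \<open>log (p(y|a) / p(y)) = (L\<^sub>y - L) + \<Sum>\<^sub>k log (p(y|a\<^sub>k) / p(y))\<close>, and the
  sum is squeezed between the infimum and supremum terms of \<open>\<epsilon>\<^sub>1\<close>. Hence \<open>U > \<epsilon>\<^sub>1\<close> forces
  \<open>L\<^sub>y - L\<close> to deviate from its mean \<open>-\<gamma>\<close> by more than \<open>s\<^sup>*/\<surd>\<delta>\<close>. By Minkowski the standard
  deviation of \<open>L\<^sub>y - L\<close> is at most \<open>\<sigma> + \<sigma>\<^sub>y \<le> s\<^sup>*\<close>, so Chebyshev's inequality bounds the
  probability of such a deviation by \<open>\<delta>\<close>.\<close>

lemma add_le_powr_sum_powr_inverse:
  fixes a b p :: real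
  assumes "0 \<le> a" "0 \<le> b" "1 \<le> p"
  shows "a + b \<le> (a powr (1/p) + b powr (1/p)) powr p"
proof -
  define u v where "u = a powr (1/p)" and "v = b powr (1/p)"
  have uv: "0 \<le> u" "0 \<le> v" by (simp_all add: u_def v_def)
  have powr_eq: "x powr p = x * x powr (p - 1)" if "0 \<le> x" for x :: real
    using that powr_add[of x 1 "p - 1"] by (cases "x = 0") auto
  have "a + b = u powr p + v powr p"
    using assms by (simp add: u_def v_def powr_powr)
  also have "\<dots> \<le> u * (u + v) powr (p - 1) + v * (u + v) powr (p - 1)"
    using uv assms(3) by (simp add: powr_eq) (intro add_mono mult_left_mono powr_mono2; simp)
  also have "\<dots> = (u + v) powr p"
    using uv by (simp add: powr_eq distrib_right)
  finally show ?thesis by (simp add: u_def v_def)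
qed

lemma expectation_mult_square_le_pmf_finite:
  fixes f g :: "'a \<Rightarrow> real"
  assumes "finite (set_pmf P)"
  shows "(measure_pmf.expectation P (\<lambda>z. f z * g z))\<^sup>2 \<le>
    measure_pmf.expectation P (\<lambda>z. (f z)\<^sup>2) * measure_pmf.expectation P (\<lambda>z. (g z)\<^sup>2)"
proof -
  have E: "measure_pmf.expectation P h = (\<Sum>z\<in>set_pmf P. (sqrt (pmf P z))\<^sup>2 * h z)"
    for h :: "'a \<Rightarrow> real"
    using integral_measure_pmf_real[OF assms, of P h] by (simp add: mult.commute)
  show ?thesis
    unfolding E
    using Cauchy_Schwarz_ineq_sum[of "\<lambda>z. sqrt (pmf P z) * f z" "\<lambda>z. sqrt (pmf P z) * g z"]
    by (simp add: power_mult_distrib algebra_simps)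
qed

lemma sqrt_variance_diff_le_pmf_finite:
  fixes X Y :: "'a \<Rightarrow> real"
  assumes fin: "finite (set_pmf P)"
  shows "sqrt (measure_pmf.variance P (\<lambda>z. X z - Y z))
    \<le> sqrt (measure_pmf.variance P X) + sqrt (measure_pmf.variance P Y)"
proof -
  let ?E = "measure_pmf.expectation P"
  define X' Y' where "X' z = X z - ?E X" and "Y' z = Y z - ?E Y" for z
  have int: "integrable (measure_pmf P) f" for f :: "_ \<Rightarrow> real"
    using integrable_measure_pmf_finite[OF fin] .
  have vX: "measure_pmf.variance P X = ?E (\<lambda>z. (X' z)\<^sup>2)"
    and vY: "measure_pmf.variance P Y = ?E (\<lambda>z. (Y' z)\<^sup>2)"
    by (simp_all add: X'_def Y'_def)
  have mean: "?E (\<lambda>z. X z - Y z) = ?E X - ?E Y"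
    by (simp add: int)
  have centred: "X z - Y z - (?E X - ?E Y) = X' z - Y' z" for z
    by (simp add: X'_def Y'_def)
  have "measure_pmf.variance P (\<lambda>z. X z - Y z) = ?E (\<lambda>z. (X' z - Y' z)\<^sup>2)"
    by (simp only: mean centred)
  also have "\<dots> = ?E (\<lambda>z. (X' z)\<^sup>2) + ?E (\<lambda>z. (Y' z)\<^sup>2) - 2 * ?E (\<lambda>z. X' z * Y' z)"
    by (simp add: int power2_diff mult.assoc)
  also have "\<dots> \<le> (sqrt (?E (\<lambda>z. (X' z)\<^sup>2)) + sqrt (?E (\<lambda>z. (Y' z)\<^sup>2)))\<^sup>2"
  proof -
    have "(?E (\<lambda>z. X' z * Y' z))\<^sup>2 \<le> ?E (\<lambda>z. (X' z)\<^sup>2) * ?E (\<lambda>z. (Y' z)\<^sup>2)"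
      by (rule expectation_mult_square_le_pmf_finite[OF fin])
    then have "- ?E (\<lambda>z. X' z * Y' z) \<le> sqrt (?E (\<lambda>z. (X' z)\<^sup>2)) * sqrt (?E (\<lambda>z. (Y' z)\<^sup>2))"
      by (metis real_le_rsqrt power2_minus real_sqrt_mult)
    then show ?thesis
      by (simp add: power2_sum integral_nonneg)
  qed
  finally show ?thesis
    unfolding vX vY by (rule real_le_lsqrt[rotated]) simp
qed

lemma (in prob_space) prob_abs_deviation_gt_le:
  fixes X :: "'a \<Rightarrow> real"
  assumes [measurable]: "random_variable borel X" and sq: "integrable M (\<lambda>x. (X x)\<^sup>2)"
    and "0 < \<delta>" "0 \<le> t" and var: "variance X \<le> \<delta> * t\<^sup>2"
  shows "prob {x \<in> space M. t < \<bar>X x - expectation X\<bar>} \<le> \<delta>"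
proof (cases "t = 0")
  case True
  have "integrable M X"
    by (rule square_integrable_imp_integrable[OF assms(1) sq])
  then have "integrable M (\<lambda>x. (X x - expectation X)\<^sup>2)"
    using sq by (simp add: power2_diff)
  moreover have "variance X = 0"
    using var True variance_positive[of X] by simp
  ultimately have "AE x in M. (X x - expectation X)\<^sup>2 = 0"
    by (subst integral_nonneg_eq_0_iff_AE[symmetric]) auto
  then have "AE x in M. \<not> t < \<bar>X x - expectation X\<bar>"
    by eventually_elim (simp add: True)
  then show ?thesis
    using \<open>0 < \<delta>\<close> by (simp add: prob_eq_0_AE)
next
  case False
  with \<open>0 \<le> t\<close> have "0 < t" by simp
  have "prob {x \<in> space M. t < \<bar>X x - expectation X\<bar>}
      \<le> prob {x \<in> space M. t \<le> \<bar>X x - expectation X\<bar>}"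
    by (intro finite_measure_mono) (force, measurable)
  also have "\<dots> \<le> variance X / t\<^sup>2"
    using sq \<open>0 < t\<close> by (intro Chebyshev_inequality) auto
  also have "\<dots> \<le> \<delta>"
    using var \<open>0 < t\<close> by (simp add: divide_le_eq)
  finally show ?thesis .
qed

lemma ln_div_prod:
  fixes x :: real and d :: nat
  assumes "0 < x" "\<And>k. k < d \<Longrightarrow> 0 < f k"
  shows "ln (x / (\<Prod>k<d. f k)) = ln x - (\<Sum>k<d. ln (f k))"
proof -
  have "ln (\<Prod>k<d. f k) = (\<Sum>k<d. ln (f k))"
    using assms(2) by (intro ln_prod) force+
  moreover have "0 < (\<Prod>k<d. f k)"
    using assms(2) by (intro prod_pos) simp
  ultimately show ?thesis
    using assms(1) by (simp add: ln_divide_pos)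
qed

lemma ln_div_bounded_by_Min_Max:
  fixes f :: "'b \<Rightarrow> real"
  assumes "finite S" "x \<in> S" "\<And>s. s \<in> S \<Longrightarrow> 0 < f s" "0 < c"
  shows "- ln (f x / c) \<le> ln (c / Min (f ` S))"
    and "ln (f x / c) \<le> ln (Max (f ` S) / c)"
proof -
  have "Min (f ` S) \<in> f ` S"
    using assms by (intro Min_in) auto
  then have pos: "0 < f x" "0 < Min (f ` S)"
    using assms by auto
  moreover have "Min (f ` S) \<le> f x" "f x \<le> Max (f ` S)"
    using assms by auto
  ultimately show "- ln (f x / c) \<le> ln (c / Min (f ` S))"
    and "ln (f x / c) \<le> ln (Max (f ` S) / c)"
    using \<open>0 < c\<close> by (simp_all add: ln_divide_pos)
qed

lemma pY_given_Ak_pos: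
  assumes "set_pmf P = PiE {..<d} Ak \<times> UNIV" "k < d" "x \<in> Ak k"
  shows "0 < pY_given_Ak P y k x"
proof -
  obtain a where "a \<in> PiE {..<d} Ak"
    using set_pmf_not_empty[of P] assms(1) by auto
  then have z: "(a(k := x), y) \<in> set_pmf P"
    using assms by (auto simp: PiE_iff extensional_def)
  have "0 < pAkY P k x y" "0 < pAk P k x"
    unfolding pAkY_def pAk_def by (auto intro: measure_pmf_posI[OF z])
  then show ?thesis
    by (simp add: pY_given_Ak_def)
qed

lemma ln_pY_given_A_div_pY:
  assumes z: "(a, y) \<in> set_pmf P"
  shows "ln (pY_given_A P y a / pY P y)
    = Lyrv d P (a, y) - Lrv d P (a, y) + (\<Sum>k<d. ln (pY_given_Ak P y k (a k) / pY P y))"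
proof -
  have pos: "0 < pAY P a y" "0 < pA P a" "0 < pY P y"
    "\<And>k. 0 < pAkY P k (a k) y" "\<And>k. 0 < pAk P k (a k)"
    unfolding pAY_def pA_def pY_def pAkY_def pAk_def by (auto intro: measure_pmf_posI[OF z])
  have "Lrv d P (a, y) = ln (pA P a) - (\<Sum>k<d. ln (pAk P k (a k)))"
    using ln_div_prod[of "pA P a" d "\<lambda>k. pAk P k (a k)"] pos by (simp add: Lrv_def)
  moreover have "Lyrv d P (a, y) = ln (pAY P a y / pY P y) - (\<Sum>k<d. ln (pAkY P k (a k) y / pY P y))"
    using ln_div_prod[of "pAY P a y / pY P y" d "\<lambda>k. pAkY P k (a k) y / pY P y"] pos
    by (simp add: Lyrv_def pA_given_Y_def pAk_given_Y_def)
  moreover have "ln (pAY P a y / pY P y) = ln (pAY P a y) - ln (pY P y)"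
    and "ln (pY_given_A P y a / pY P y) = ln (pAY P a y) - ln (pA P a) - ln (pY P y)"
    using pos by (simp_all add: pY_given_A_def ln_divide_pos ln_mult_pos)
  moreover have "(\<Sum>k<d. ln (pAkY P k (a k) y / pY P y)) = (\<Sum>k<d. ln (pAkY P k (a k) y) - ln (pY P y))"
    using pos by (intro sum.cong refl) (simp add: ln_divide_pos)
  moreover have "(\<Sum>k<d. ln (pY_given_Ak P y k (a k) / pY P y))
      = (\<Sum>k<d. ln (pAkY P k (a k) y) - ln (pAk P k (a k)) - ln (pY P y))"
    using pos by (intro sum.cong refl) (simp add: pY_given_Ak_def ln_divide_pos ln_mult_pos)
  ultimately show ?thesis
    unfolding sum_subtractf by linarith
qed

lemma sqrt_variance_Lyrv_diff_Lrv_le: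
  assumes "finite (set_pmf P)"
  shows "sqrt (measure_pmf.variance P (\<lambda>z. Lyrv d P z - Lrv d P z))
    \<le> ((sigmaL d P) powr (2/3) + (sigmaLy d P) powr (2/3)) powr (3/2)"
proof -
  have "sqrt (measure_pmf.variance P (\<lambda>z. Lyrv d P z - Lrv d P z)) \<le> sigmaLy d P + sigmaL d P"
    unfolding sigmaL_def sigmaLy_def by (rule sqrt_variance_diff_le_pmf_finite[OF assms])
  also have "\<dots> \<le> ((sigmaL d P) powr (2/3) + (sigmaLy d P) powr (2/3)) powr (3/2)"
    using add_le_powr_sum_powr_inverse[of "sigmaL d P" "sigmaLy d P" "3/2"]
    by (simp add: sigmaL_def sigmaLy_def measure_pmf.variance_positive add.commute)
  finally show ?thesis .
qed

definition epsilon1_offset ::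
  "nat \<Rightarrow> (nat \<Rightarrow> 'a set) \<Rightarrow> ((nat \<Rightarrow> 'a) \<times> 'y) pmf \<Rightarrow> 'y \<Rightarrow> real" where
  "epsilon1_offset d Ak P y =
     max ((TC d P - TCcond d P) + (\<Sum>k<d. ln (pY P y / Min ((\<lambda>x. pY_given_Ak P y k x) ` Ak k))))
         (- (TC d P - TCcond d P) + (\<Sum>k<d. ln (Max ((\<lambda>x. pY_given_Ak P y k x) ` Ak k) / pY P y)))"

lemma epsilon1_eq:
  "epsilon1 d Ak P \<delta> =
     ((sigmaL d P) powr (2/3) + (sigmaLy d P) powr (2/3)) powr (3/2) / sqrt \<delta>
     + Max (range (epsilon1_offset d Ak P))"
  unfolding epsilon1_def epsilon1_offset_def Let_def ..

lemma Urv_le_deviation_plus_offset: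
  fixes P :: "((nat \<Rightarrow> 'a) \<times> 'y::finite) pmf"
  assumes fin: "\<And>k. k < d \<Longrightarrow> finite (Ak k)"
    and supp: "set_pmf P = PiE {..<d} Ak \<times> UNIV" and z: "z \<in> set_pmf P"
  shows "Urv P z \<le> \<bar>Lyrv d P z - Lrv d P z - (TCcond d P - TC d P)\<bar> + Max (range (epsilon1_offset d Ak P))"
proof -
  obtain a y where z_eq: "z = (a, y)"
    by (cases z)
  have a: "a k \<in> Ak k" if "k < d" for k
    using z supp that by (auto simp: z_eq)
  have pY: "0 < pY P y"
    unfolding pY_def using z by (intro measure_pmf_posI) (auto simp: z_eq)
  define c where "c = (\<Sum>k<d. ln (pY_given_Ak P y k (a k) / pY P y))"
  have "c \<le> (\<Sum>k<d. ln (Max ((\<lambda>x. pY_given_Ak P y k x) ` Ak k) / pY P y))"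
    unfolding c_def
  proof (rule sum_mono)
    fix k assume "k \<in> {..<d}"
    then show "ln (pY_given_Ak P y k (a k) / pY P y)
        \<le> ln (Max ((\<lambda>x. pY_given_Ak P y k x) ` Ak k) / pY P y)"
      by (intro ln_div_bounded_by_Min_Max(2)[where f = "\<lambda>x. pY_given_Ak P y k x"])
        (auto simp: fin a pY pY_given_Ak_pos[OF supp])
  qed
  moreover have "- c \<le> (\<Sum>k<d. ln (pY P y / Min ((\<lambda>x. pY_given_Ak P y k x) ` Ak k)))"
    unfolding c_def sum_negf[symmetric]
  proof (rule sum_mono)
    fix k assume "k \<in> {..<d}"
    then show "- ln (pY_given_Ak P y k (a k) / pY P y)
        \<le> ln (pY P y / Min ((\<lambda>x. pY_given_Ak P y k x) ` Ak k))"
      by (intro ln_div_bounded_by_Min_Max(1)[where f = "\<lambda>x. pY_given_Ak P y k x"])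
        (auto simp: fin a pY pY_given_Ak_pos[OF supp])
  qed
  moreover have "Urv P z = \<bar>Lyrv d P z - Lrv d P z + c\<bar>"
    unfolding Urv_def c_def z_eq using ln_pY_given_A_div_pY[OF z[unfolded z_eq]] by simp
  moreover have "epsilon1_offset d Ak P y \<le> Max (range (epsilon1_offset d Ak P))"
    by (rule Max_ge) auto
  ultimately show ?thesis
    unfolding epsilon1_offset_def by linarith
qed

theorem mainTheorem4:
  fixes d :: nat and Ak :: "nat \<Rightarrow> 'a set"
    and P :: "((nat \<Rightarrow> 'a) \<times> 'y::finite) pmf" and \<delta> :: real
  assumes "\<And>k. k < d \<Longrightarrow> finite (Ak k)"
    and "set_pmf P = PiE {..<d} Ak \<times> UNIV"
    and "0 < \<delta>" and "\<delta> \<le> 1"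
  shows "measure_pmf.prob P {z. Urv P z > epsilon1 d Ak P \<delta>} \<le> \<delta>"
proof -
  have fin_supp: "finite (set_pmf P)"
    unfolding assms(2) using assms(1) by (intro finite_cartesian_product finite_PiE) auto
  define D where "D = (\<lambda>z. Lyrv d P z - Lrv d P z)"
  define t where "t = ((sigmaL d P) powr (2/3) + (sigmaLy d P) powr (2/3)) powr (3/2) / sqrt \<delta>"
  have ED: "measure_pmf.expectation P D = TCcond d P - TC d P"
    unfolding D_def TCcond_def TC_def by (simp add: integrable_measure_pmf_finite[OF fin_supp])
  have "measure_pmf.variance P D \<le> \<delta> * t\<^sup>2"
    using sqrt_variance_Lyrv_diff_Lrv_le[OF fin_supp, of d] assms(3)
    by (simp add: D_def t_def power_divide sqrt_le_D)
  then have "measure_pmf.prob P {z. t < \<bar>D z - measure_pmf.expectation P D\<bar>} \<le> \<delta>"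
    using measure_pmf.prob_abs_deviation_gt_le[of D P \<delta> t] assms(3)
    by (simp add: integrable_measure_pmf_finite[OF fin_supp] t_def)
  moreover have "Urv P z \<le> \<bar>D z - measure_pmf.expectation P D\<bar> + Max (range (epsilon1_offset d Ak P))"
    if "z \<in> set_pmf P" for z
    using Urv_le_deviation_plus_offset[OF assms(1,2) that] unfolding D_def ED[unfolded D_def] .
  then have "measure_pmf.prob P {z. Urv P z > epsilon1 d Ak P \<delta>}
      \<le> measure_pmf.prob P {z. t < \<bar>D z - measure_pmf.expectation P D\<bar>}"
    by (intro measure_pmf.finite_measure_mono_AE)
      (fastforce simp: AE_measure_pmf_iff epsilon1_eq t_def, simp)
  ultimately show ?thesis
    by linarith
qed

end
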